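(* Let $G$ be a graph. Then \[\chi(G) \leq \frac{1}{2} (\omega(G) + \Delta(G) + 1) + \frac{\delta(\overline{G}) - \eta(G)}{4}.\]
   Context: All graphs are finite and simple with non-empty vertex set. $\chi$ is the chromatic number, $\omega$ the clique number, $\Delta$ the maximum degree; $\overline{G}$ is the complement of $G$ and $\delta(\overline{G})$ its minimum degree. The chromatic excess of $G$ is $\eta(G) = \max_{H} \left(|H| - 3\chi(H)\right)$, where the maximum ranges over all induced subgraphs $H$ of $G$ with non-empty vertex set and $|H|$ is the number of vertices of $H$. *)

theory Defs
  imports Complex_Main
begin

definition graph :: "'a set \<Rightarrow> ('a \<Rightarrow> 'a \<Rightarrow> bool) \<Rightarrow> bool" where
  "graph V E \<longleftrightarrow> finite V \<and> V \<noteq> {} \<and>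
     (\<forall>u v. E u v \<longrightarrow> u \<in> V \<and> v \<in> V) \<and>
     (\<forall>u v. E u v \<longrightarrow> E v u) \<and> (\<forall>v. \<not> E v v)"

definition colouring :: "'a set \<Rightarrow> ('a \<Rightarrow> 'a \<Rightarrow> bool) \<Rightarrow> nat \<Rightarrow> ('a \<Rightarrow> nat) \<Rightarrow> bool" where
  "colouring V E k c \<longleftrightarrow> (\<forall>v\<in>V. c v < k) \<and> (\<forall>u\<in>V. \<forall>v\<in>V. E u v \<longrightarrow> c u \<noteq> c v)"

definition chromatic_number :: "'a set \<Rightarrow> ('a \<Rightarrow> 'a \<Rightarrow> bool) \<Rightarrow> nat" where
  "chromatic_number V E = (LEAST k. \<exists>c. colouring V E k c)"

definition clique :: "'a set \<Rightarrow> ('a \<Rightarrow> 'a \<Rightarrow> bool) \<Rightarrow> 'a set \<Rightarrow> bool" where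
  "clique V E K \<longleftrightarrow> K \<subseteq> V \<and> (\<forall>u\<in>K. \<forall>v\<in>K. u \<noteq> v \<longrightarrow> E u v)"

definition clique_number :: "'a set \<Rightarrow> ('a \<Rightarrow> 'a \<Rightarrow> bool) \<Rightarrow> nat" where
  "clique_number V E = Max (card ` {K. clique V E K})"

definition degree :: "'a set \<Rightarrow> ('a \<Rightarrow> 'a \<Rightarrow> bool) \<Rightarrow> 'a \<Rightarrow> nat" where
  "degree V E v = card {u\<in>V. E v u}"

definition max_degree :: "'a set \<Rightarrow> ('a \<Rightarrow> 'a \<Rightarrow> bool) \<Rightarrow> nat" where
  "max_degree V E = Max (degree V E ` V)"

definition complement :: "'a set \<Rightarrow> ('a \<Rightarrow> 'a \<Rightarrow> bool) \<Rightarrow> 'a \<Rightarrow> 'a \<Rightarrow> bool" where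
  "complement V E u v \<longleftrightarrow> u \<in> V \<and> v \<in> V \<and> u \<noteq> v \<and> \<not> E u v"

definition min_degree :: "'a set \<Rightarrow> ('a \<Rightarrow> 'a \<Rightarrow> bool) \<Rightarrow> nat" where
  "min_degree V E = Min (degree V E ` V)"

definition induced :: "('a \<Rightarrow> 'a \<Rightarrow> bool) \<Rightarrow> 'a set \<Rightarrow> 'a \<Rightarrow> 'a \<Rightarrow> bool" where
  "induced E H u v \<longleftrightarrow> u \<in> H \<and> v \<in> H \<and> E u v"

definition chromatic_excess :: "'a set \<Rightarrow> ('a \<Rightarrow> 'a \<Rightarrow> bool) \<Rightarrow> int" where
  "chromatic_excess V E =
     Max ((\<lambda>H. int (card H) - 3 * int (chromatic_number H (induced E H))) ` {H. H \<subseteq> V \<and> H \<noteq> {}})"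

end

theory Submission
  imports Defs
begin

text \<open>
  Write nd(v) for the number of non-neighbours of v. Every nonempty vertex set W and every
  H \<subseteq> W admit a vertex v \<in> W with
  4 \<chi>(W) + |H| + nd(v) \<le> 2 |W| + 2 \<omega>(W) + 3 \<chi>(H);
  taking H to realise the chromatic excess and using nd(v) \<ge> \<delta>(complement) = |V| - 1 - \<Delta>
  gives the theorem.

  If H is nonempty, remove a maximal independent set I of W
  that contains a colour class of an optimal colouring of H: \<chi>(W) drops by at most one, \<chi>(H) by
  at least one, and a vertex outside I has a neighbour in I, so it loses at most |I| - 1
  non-neighbours. If H is empty, an independent set with at least three vertices can play the role
  of H. Otherwise every colour class has at most two vertices, and either some vertex w can be
  deleted without lowering \<chi>, or w has a colour of its own in an optimal colouring. In the latter
  case |W| + s = 2 \<chi>(W), where s counts the singleton classes; these form a clique, and exchanging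
  colours within at most four classes shows that the clique extends by the partners of the
  non-neighbours of w, which gives 2 s + nd(w) \<le> 2 \<omega>(W).
\<close>

locale simple_adjacency =
  fixes E :: "'a \<Rightarrow> 'a \<Rightarrow> bool"
  assumes adj_sym: "E u v \<Longrightarrow> E v u"
    and adj_irrefl: "\<not> E v v"
begin

abbreviation chi :: "'a set \<Rightarrow> nat" where "chi W \<equiv> chromatic_number W E"
abbreviation omega :: "'a set \<Rightarrow> nat" where "omega W \<equiv> clique_number W E"

definition independent :: "'a set \<Rightarrow> bool" where
  "independent I \<longleftrightarrow> (\<forall>a\<in>I. \<forall>b\<in>I. \<not> E a b)"

definition non_neighbours :: "'a set \<Rightarrow> 'a \<Rightarrow> 'a set" where
  "non_neighbours W v = {u\<in>W. u \<noteq> v \<and> \<not> E v u}"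

definition nondegree :: "'a set \<Rightarrow> 'a \<Rightarrow> nat" where
  "nondegree W v = card (non_neighbours W v)"

lemma independent_empty [simp]: "independent {}"
  unfolding independent_def by blast

lemma independent_insert [simp]: "independent (insert a I) \<longleftrightarrow> independent I \<and> (\<forall>b\<in>I. \<not> E a b)"
  unfolding independent_def using adj_sym adj_irrefl by blast

lemma independent_subset: "independent I \<Longrightarrow> J \<subseteq> I \<Longrightarrow> independent J"
  unfolding independent_def by blast

lemma independent_colour_class: "colouring W E k c \<Longrightarrow> independent {v\<in>W. c v = j}"
  unfolding colouring_def independent_def by blast

lemma chromatic_number_le: "colouring W E k c \<Longrightarrow> chi W \<le> k"
  unfolding chromatic_number_def by (rule Least_le) blast

lemma colouring_chromatic_number:
  assumes "finite W"
  obtains c where "colouring W E (chi W) c"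
proof -
  obtain h where h: "bij_betw h W {0..<card W}"
    using ex_bij_betw_finite_nat[OF assms] by blast
  have "colouring W E (card W) h"
    unfolding colouring_def
  proof (intro conjI ballI impI)
    show "h v < card W" if "v \<in> W" for v
      using h that by (auto dest: bij_betw_apply)
    show "h u \<noteq> h v" if "u \<in> W" "v \<in> W" "E u v" for u v
    proof -
      have "u \<noteq> v" using \<open>E u v\<close> adj_irrefl by blast
      then show ?thesis using h that unfolding bij_betw_def inj_on_def by blast
    qed
  qed
  then have "\<exists>k c. colouring W E k c" by blast
  then have "\<exists>c. colouring W E (chi W) c"
    unfolding chromatic_number_def by (rule LeastI_ex)
  then show thesis using that by blast
qed

lemma chromatic_number_empty: "chi {} = 0"
  using chromatic_number_le[of "{}" 0 "\<lambda>_. 0"] by (simp add: colouring_def)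

lemma colouring_insert_independent:
  assumes "colouring W E k c" and "independent I"
  shows "colouring (W \<union> I) E (Suc k) (\<lambda>v. if v \<in> I then k else c v)"
  using assms unfolding colouring_def independent_def by auto

lemma chromatic_number_le_card_cover:
  assumes fin: "finite \<I>" and cover: "W \<subseteq> \<Union>\<I>" and indep: "\<forall>I\<in>\<I>. independent I"
  shows "chi W \<le> card \<I>"
proof -
  obtain g where g: "bij_betw g \<I> {0..<card \<I>}" using ex_bij_betw_finite_nat[OF fin] by blast
  define S where "S v = (SOME I. I \<in> \<I> \<and> v \<in> I)" for v
  have S: "S v \<in> \<I> \<and> v \<in> S v" if "v \<in> W" for v
  proof -
    have "\<exists>I. I \<in> \<I> \<and> v \<in> I" using that cover by blast
    then show ?thesis unfolding S_def by (rule someI_ex)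
  qed
  have "colouring W E (card \<I>) (g \<circ> S)"
    unfolding colouring_def
  proof (intro conjI ballI impI)
    show "(g \<circ> S) v < card \<I>" if "v \<in> W" for v
      using S[OF that] g by (auto dest: bij_betw_apply)
    show "(g \<circ> S) u \<noteq> (g \<circ> S) v" if "u \<in> W" "v \<in> W" "E u v" for u v
    proof
      assume "(g \<circ> S) u = (g \<circ> S) v"
      moreover have "S u \<in> \<I>" "S v \<in> \<I>" using S that by blast+
      ultimately have "S u = S v" using g unfolding bij_betw_def inj_on_def by simp
      then have "u \<in> S u" "v \<in> S u" "independent (S u)" using S indep that by auto
      then show False using \<open>E u v\<close> unfolding independent_def by blast
    qed
  qed
  then show ?thesis by (rule chromatic_number_le)
qed

lemma card_le_cover_of_optimal_colour_classes:
  assumes c: "colouring W E (chi W) c" and J: "J \<subseteq> {..<chi W}"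
    and fin: "finite \<I>" and indep: "\<forall>I\<in>\<I>. independent I"
    and cover: "{v\<in>W. c v \<in> J} \<subseteq> \<Union>\<I>"
  shows "card J \<le> card \<I>"
proof -
  define \<C> where "\<C> = (\<lambda>j. {v\<in>W. c v = j}) ` ({..<chi W} - J)"
  have "W \<subseteq> \<Union>(\<C> \<union> \<I>)"
  proof
    fix v assume v: "v \<in> W"
    show "v \<in> \<Union>(\<C> \<union> \<I>)"
    proof (cases "c v \<in> J")
      case True
      then show ?thesis using v cover by blast
    next
      case False
      have "c v < chi W" using c v unfolding colouring_def by blast
      then have "{u\<in>W. c u = c v} \<in> \<C>" using False unfolding \<C>_def by blast
      then show ?thesis using v by blast
    qed
  qed
  moreover have "\<forall>I\<in>\<C> \<union> \<I>. independent I"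
    using indep independent_colour_class[OF c] unfolding \<C>_def by auto
  ultimately have "chi W \<le> card (\<C> \<union> \<I>)"
    using fin by (intro chromatic_number_le_card_cover) (auto simp: \<C>_def)
  also have "\<dots> \<le> card \<C> + card \<I>" by (rule card_Un_le)
  also have "card \<C> \<le> card ({..<chi W} - J)"
    unfolding \<C>_def by (rule card_image_le) simp
  also have "\<dots> = chi W - card J"
    using J by (simp add: card_Diff_subset finite_subset)
  finally show ?thesis
    using card_mono[OF finite_lessThan J] by simp
qed

lemma optimal_colouring_surj:
  assumes c: "colouring W E (chi W) c"
  shows "c ` W = {..<chi W}"
proof
  show "c ` W \<subseteq> {..<chi W}" using c unfolding colouring_def by blast
  show "{..<chi W} \<subseteq> c ` W"
  proof (rule subsetI, rule ccontr)
    fix j assume "j \<in> {..<chi W}" "j \<notin> c ` W"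
    then have "card {j} \<le> card ({} :: 'a set set)"
      by (intro card_le_cover_of_optimal_colour_classes[OF c]) auto
    then show False by simp
  qed
qed

lemma chromatic_number_pos:
  assumes "finite W" "W \<noteq> {}"
  shows "0 < chi W"
proof -
  obtain c where "colouring W E (chi W) c" using colouring_chromatic_number[OF assms(1)] .
  then show ?thesis using assms(2) unfolding colouring_def by fastforce
qed

lemma chromatic_number_independent: "independent W \<Longrightarrow> chi W \<le> 1"
  using chromatic_number_le_card_cover[of "{W}" W] by simp

lemma chromatic_number_le_Suc_Diff_independent:
  assumes "finite W" "independent I" "I \<subseteq> W"
  shows "chi W \<le> Suc (chi (W - I))"
proof -
  obtain c where "colouring (W - I) E (chi (W - I)) c"
    using colouring_chromatic_number assms(1) by blast
  then have "colouring (W - I \<union> I) E (Suc (chi (W - I))) (\<lambda>v. if v \<in> I then chi (W - I) else c v)"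
    using assms(2) by (rule colouring_insert_independent)
  moreover have "W - I \<union> I = W" using assms(3) by blast
  ultimately have "colouring W E (Suc (chi (W - I))) (\<lambda>v. if v \<in> I then chi (W - I) else c v)"
    by simp
  then show ?thesis by (rule chromatic_number_le)
qed

lemma chromatic_number_Diff_colour_class:
  assumes c: "colouring H E (chi H) c" and j: "j < chi H" and Jc: "{v\<in>H. c v = j} \<subseteq> I"
  shows "chi (H - I) < chi H"
proof -
  define \<C> where "\<C> = (\<lambda>i. {v\<in>H. c v = i}) ` ({..<chi H} - {j})"
  have "H - I \<subseteq> \<Union>\<C>"
    using c Jc unfolding colouring_def \<C>_def by blast
  then have "chi (H - I) \<le> card \<C>"
    using independent_colour_class[OF c] by (intro chromatic_number_le_card_cover) (auto simp: \<C>_def)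
  also have "\<dots> \<le> card ({..<chi H} - {j})" unfolding \<C>_def by (rule card_image_le) simp
  finally show ?thesis using j by simp
qed

lemma maximal_independent_extension:
  assumes fin: "finite W" and J: "J \<subseteq> W" "independent J"
  obtains I where "J \<subseteq> I" "I \<subseteq> W" "independent I" "\<forall>z\<in>W - I. \<exists>i\<in>I. E z i"
proof -
  let ?S = "{I. J \<subseteq> I \<and> I \<subseteq> W \<and> independent I}"
  have "finite ?S" using fin by (rule rev_finite_subset[OF finite_Pow_iff[THEN iffD2]]) auto
  moreover have "J \<in> ?S" using J by blast
  ultimately obtain I where I: "I \<in> ?S" and max: "\<And>I'. I' \<in> ?S \<Longrightarrow> I \<subseteq> I' \<Longrightarrow> I = I'"
    using finite_has_maximal by (metis (no_types, lifting) empty_iff)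
  have "\<exists>i\<in>I. E z i" if z: "z \<in> W - I" for z
  proof (rule ccontr)
    assume "\<not> (\<exists>i\<in>I. E z i)"
    then have "independent (insert z I)"
      using I adj_sym adj_irrefl unfolding independent_def by blast
    then have "insert z I \<in> ?S" using I z by blast
    then show False using max z by blast
  qed
  then show thesis using that I by blast
qed

lemma card_le_clique_number:
  assumes "finite W" "clique W E K"
  shows "card K \<le> omega W"
proof -
  have "finite {K. clique W E K}"
    using assms(1) by (rule rev_finite_subset[OF finite_Pow_iff[THEN iffD2]]) (auto simp: clique_def)
  then show ?thesis unfolding clique_number_def using assms(2) by (intro Max_ge) auto
qed

lemma clique_number_mono:
  assumes "finite W" "W' \<subseteq> W"
  shows "omega W' \<le> omega W"
proof -
  have "finite {K. clique W' E K}"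
    using assms by (intro rev_finite_subset[OF finite_Pow_iff[THEN iffD2]]) (auto simp: clique_def)
  moreover have "clique W' E {}" by (simp add: clique_def)
  ultimately have "omega W' \<in> card ` {K. clique W' E K}"
    unfolding clique_number_def by (intro Max_in) auto
  then obtain K where "clique W' E K" "omega W' = card K" by blast
  then show ?thesis using assms card_le_clique_number[of W K] by (auto simp: clique_def)
qed

lemma clique_number_pos: "finite W \<Longrightarrow> v \<in> W \<Longrightarrow> 1 \<le> omega W"
  using card_le_clique_number[of W "{v}"] by (simp add: clique_def)

lemma finite_non_neighbours: "finite W \<Longrightarrow> finite (non_neighbours W v)"
  unfolding non_neighbours_def by simp

lemma clique_Un:
  assumes "clique W E K" "clique W E L" "\<forall>a\<in>K. \<forall>b\<in>L. E a b"
  shows "clique W E (K \<union> L)"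
  unfolding clique_def
proof (intro conjI ballI impI)
  show "K \<union> L \<subseteq> W" using assms(1,2) unfolding clique_def by blast
  fix a b assume "a \<in> K \<union> L" "b \<in> K \<union> L" "a \<noteq> b"
  then consider "a \<in> K" "b \<in> K" | "a \<in> L" "b \<in> L" | "a \<in> K" "b \<in> L" | "a \<in> L" "b \<in> K"
    by blast
  then show "E a b"
    using assms \<open>a \<noteq> b\<close> unfolding clique_def by cases (blast intro: adj_sym)+
qed

lemma nondegree_le_Diff:
  assumes "finite W"
  shows "nondegree W v \<le> nondegree (W - I) v + nondegree (W \<inter> I) v"
proof -
  have "non_neighbours W v = non_neighbours (W - I) v \<union> non_neighbours (W \<inter> I) v"
    unfolding non_neighbours_def by blast
  then show ?thesis unfolding nondegree_def by (metis card_Un_le)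
qed

lemma nondegree_le_card_Diff1:
  assumes "finite I" "u \<in> I" "u \<notin> non_neighbours I v"
  shows "nondegree I v \<le> card I - 1"
proof -
  have "non_neighbours I v \<subseteq> I - {u}" using assms(3) unfolding non_neighbours_def by blast
  then show ?thesis unfolding nondegree_def using assms(1,2) by (metis card_Diff_singleton card_mono finite_Diff)
qed

lemma nondegree_le_card: "finite I \<Longrightarrow> nondegree I v \<le> card I"
  unfolding nondegree_def non_neighbours_def by (rule card_mono) auto

end

locale alpha_two_colouring = simple_adjacency +
  fixes W :: "'a set" and w :: 'a and c :: "'a \<Rightarrow> nat"
  assumes finite_W: "finite W"
    and w_in_W: "w \<in> W"
    and independent_card_le_2: "\<And>T. T \<subseteq> W \<Longrightarrow> independent T \<Longrightarrow> card T \<le> 2"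
    and colouring_c: "colouring W E (chi W) c"
    and w_alone: "\<And>v. v \<in> W \<Longrightarrow> c v = c w \<Longrightarrow> v = w"
begin

definition solo :: "'a set" where
  "solo = {u\<in>W. \<forall>v\<in>W. c v = c u \<longrightarrow> v = u}"

text \<open>Colour classes have at most two vertices; for x \<notin> solo, mate x is the other vertex of the
  class of x (for x \<in> solo it is meaningless).\<close>
definition mate :: "'a \<Rightarrow> 'a" where
  "mate x = (SOME y. y \<in> W \<and> y \<noteq> x \<and> c y = c x)"

lemma same_colour_not_adj: "a \<in> W \<Longrightarrow> b \<in> W \<Longrightarrow> c a = c b \<Longrightarrow> \<not> E a b"
  using colouring_c unfolding colouring_def by blast

lemma card_le_cover_of_colour_classes:
  assumes "finite \<I>" "\<forall>I\<in>\<I>. independent I" "J \<subseteq> c ` W" "{v\<in>W. c v \<in> J} \<subseteq> \<Union>\<I>"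
  shows "card J \<le> card \<I>"
proof (rule card_le_cover_of_optimal_colour_classes[OF colouring_c])
  show "J \<subseteq> {..<chi W}" using assms(3) optimal_colouring_surj[OF colouring_c] by simp
qed (use assms in auto)

lemma w_in_solo: "w \<in> solo"
  using w_in_W w_alone unfolding solo_def by blast

lemma solo_subset: "solo \<subseteq> W"
  unfolding solo_def by blast

lemma finite_solo: "finite solo"
  using finite_subset[OF solo_subset finite_W] .

lemma solo_alone: "u \<in> solo \<Longrightarrow> v \<in> W \<Longrightarrow> c v = c u \<Longrightarrow> v = u"
  unfolding solo_def by blast

lemma mate_colour_class:
  assumes "x \<in> W - solo"
  shows "mate x \<in> W - solo" "mate x \<noteq> x" "c (mate x) = c x"
    and "\<And>v. v \<in> W \<Longrightarrow> c v = c x \<Longrightarrow> v = x \<or> v = mate x"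
proof -
  have "\<exists>y. y \<in> W \<and> y \<noteq> x \<and> c y = c x" using assms unfolding solo_def by blast
  then have y: "mate x \<in> W" "mate x \<noteq> x" "c (mate x) = c x"
    unfolding mate_def by (metis (mono_tags, lifting) someI_ex)+
  show "mate x \<noteq> x" "c (mate x) = c x" by (fact y(2), fact y(3))
  show "mate x \<in> W - solo" using y assms unfolding solo_def by force
  show "v = x \<or> v = mate x" if v: "v \<in> W" "c v = c x" for v
  proof (rule ccontr)
    assume "\<not> (v = x \<or> v = mate x)"
    then have "card {x, mate x, v} = 3" using y by auto
    moreover have "independent {x, mate x, v}"
      using y v assms same_colour_not_adj by auto
    ultimately show False using independent_card_le_2[of "{x, mate x, v}"] y v assms by auto
  qed
qed

lemma solo_clique:
  assumes "u \<in> solo" "u' \<in> solo" "u \<noteq> u'"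
  shows "E u u'"
proof (rule ccontr)
  assume "\<not> E u u'"
  have "card {c u, c u'} \<le> card {{u, u'}}"
  proof (rule card_le_cover_of_colour_classes)
    show "\<forall>I\<in>{{u, u'}}. independent I" using \<open>\<not> E u u'\<close> by simp
    show "{c u, c u'} \<subseteq> c ` W" using assms unfolding solo_def by blast
    show "{v\<in>W. c v \<in> {c u, c u'}} \<subseteq> \<Union>{{u, u'}}" using assms solo_alone by blast
  qed simp
  moreover have "c u \<noteq> c u'" using assms solo_alone unfolding solo_def by blast
  ultimately show False by simp
qed

lemma non_neighbours_clique:
  assumes x: "x \<in> non_neighbours W w" and x': "x' \<in> non_neighbours W w" and "x \<noteq> x'"
  shows "E x x'"
proof (rule ccontr)
  assume "\<not> E x x'"
  moreover have "\<not> E w x" "\<not> E w x'" "x \<noteq> w" "x' \<noteq> w" "x \<in> W" "x' \<in> W"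
    using x x' unfolding non_neighbours_def by auto
  ultimately have "independent {w, x, x'}" "card {w, x, x'} = 3" using \<open>x \<noteq> x'\<close> by auto
  then show False using independent_card_le_2[of "{w, x, x'}"] \<open>x \<in> W\<close> \<open>x' \<in> W\<close> w_in_W by simp
qed

lemma non_neighbours_not_solo: "x \<in> non_neighbours W w \<Longrightarrow> x \<in> W - solo"
  using solo_clique[OF w_in_solo] unfolding non_neighbours_def by blast

text \<open>Otherwise the classes {w}, {x, mate x}, {u} could be recoloured as {w, x}, {mate x, u};
  for u = w the set {w, x, mate x} would be independent.\<close>
lemma mate_adj_solo:
  assumes x: "x \<in> non_neighbours W w" and u: "u \<in> solo"
  shows "E (mate x) u"
proof (rule ccontr)
  assume nE: "\<not> E (mate x) u"
  have xW: "x \<in> W - solo" using x by (rule non_neighbours_not_solo)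
  note m = mate_colour_class[OF xW]
  have "x \<noteq> w" "\<not> E w x" using x unfolding non_neighbours_def by auto
  have "mate x \<noteq> w" "x \<noteq> u" using m(1) xW u w_in_solo by auto
  have "\<not> E x (mate x)" using m xW same_colour_not_adj by auto
  show False
  proof (cases "u = w")
    case True
    have "\<not> E w (mate x)" using nE True adj_sym by blast
    then have "independent {w, x, mate x}" "card {w, x, mate x} = 3"
      using \<open>\<not> E w x\<close> \<open>\<not> E x (mate x)\<close> \<open>x \<noteq> w\<close> \<open>mate x \<noteq> w\<close> m(2) by auto
    then show False using independent_card_le_2[of "{w, x, mate x}"] w_in_W xW m(1) by simp
  next
    case False
    have "card {c w, c x, c u} \<le> card {{w, x}, {mate x, u}}"
    proof (rule card_le_cover_of_colour_classes)
      show "\<forall>I\<in>{{w, x}, {mate x, u}}. independent I" using \<open>\<not> E w x\<close> nE by simp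
      show "{c w, c x, c u} \<subseteq> c ` W" using w_in_W xW u unfolding solo_def by blast
      show "{v\<in>W. c v \<in> {c w, c x, c u}} \<subseteq> \<Union>{{w, x}, {mate x, u}}"
      proof
        fix v assume "v \<in> {v\<in>W. c v \<in> {c w, c x, c u}}"
        then have "v = w \<or> v = x \<or> v = mate x \<or> v = u"
          using w_alone[of v] m(4)[of v] solo_alone[OF u, of v] by auto
        then show "v \<in> \<Union>{{w, x}, {mate x, u}}" by auto
      qed
    qed simp
    moreover have "c w \<noteq> c x" using w_alone[of x] xW \<open>x \<noteq> w\<close> by auto
    moreover have "c w \<noteq> c u" using w_alone[of u] u solo_subset False by auto
    moreover have "c x \<noteq> c u" using solo_alone[OF u, of x] xW \<open>x \<noteq> u\<close> by auto
    moreover have "card {{w, x}, {mate x, u}} \<le> 2" using card_length[of "[{w, x}, {mate x, u}]"] by simp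
    ultimately show False by simp
  qed
qed

definition attached :: "'a set" where
  "attached = {x \<in> non_neighbours W w. \<forall>u\<in>solo - {w}. E x u}"

lemma mate_adj_mate:
  assumes x: "x \<in> non_neighbours W w" and x': "x' \<in> non_neighbours W w" and "x \<noteq> x'"
    and "x \<notin> attached"
  shows "E (mate x) (mate x')"
proof (rule ccontr)
  assume nE': "\<not> E (mate x) (mate x')"
  obtain u where u: "u \<in> solo" "u \<noteq> w" and nE: "\<not> E x u"
    using x \<open>x \<notin> attached\<close> unfolding attached_def by blast
  have xW: "x \<in> W - solo" and x'W: "x' \<in> W - solo"
    using non_neighbours_not_solo[OF x] non_neighbours_not_solo[OF x'] .
  note m = mate_colour_class[OF xW] and m' = mate_colour_class[OF x'W]
  have "\<not> E w x'" "x \<noteq> w" "x' \<noteq> w" using x x' unfolding non_neighbours_def by auto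
  have "c x \<noteq> c x'" using non_neighbours_clique[OF x x' \<open>x \<noteq> x'\<close>] same_colour_not_adj xW x'W by blast
  have "card {c w, c x, c x', c u} \<le> card {{w, x'}, {mate x, mate x'}, {x, u}}"
  proof (rule card_le_cover_of_colour_classes)
    show "\<forall>I\<in>{{w, x'}, {mate x, mate x'}, {x, u}}. independent I"
      using \<open>\<not> E w x'\<close> nE nE' by simp
    show "{c w, c x, c x', c u} \<subseteq> c ` W" using w_in_W xW x'W u unfolding solo_def by blast
    show "{v\<in>W. c v \<in> {c w, c x, c x', c u}} \<subseteq> \<Union>{{w, x'}, {mate x, mate x'}, {x, u}}"
    proof
      fix v assume "v \<in> {v\<in>W. c v \<in> {c w, c x, c x', c u}}"
      then have "v = w \<or> v = x \<or> v = mate x \<or> v = x' \<or> v = mate x' \<or> v = u"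
        using w_alone[of v] m(4)[of v] m'(4)[of v] solo_alone[OF u(1), of v] by auto
      then show "v \<in> \<Union>{{w, x'}, {mate x, mate x'}, {x, u}}" by auto
    qed
  qed simp
  moreover have "c w \<noteq> c x" "c w \<noteq> c x'" "c w \<noteq> c u"
    using w_alone[of x] w_alone[of x'] w_alone[of u] xW x'W u solo_subset \<open>x \<noteq> w\<close> \<open>x' \<noteq> w\<close>
    by auto
  moreover have "c x \<noteq> c u" "c x' \<noteq> c u"
    using solo_alone[OF u(1), of x] solo_alone[OF u(1), of x'] xW x'W u(1) by auto
  moreover have "card {{w, x'}, {mate x, mate x'}, {x, u}} \<le> 3"
    using card_length[of "[{w, x'}, {mate x, mate x'}, {x, u}]"] by simp
  ultimately show False using \<open>c x \<noteq> c x'\<close> by simp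
qed

lemma card_colour_class_plus_card_solo:
  assumes "j < chi W"
  shows "card {v\<in>W. c v = j} + card ({v\<in>W. c v = j} \<inter> solo) = 2"
proof -
  have "j \<in> c ` W" using optimal_colouring_surj[OF colouring_c] assms by simp
  then obtain v where v: "v \<in> W" "c v = j" by blast
  then have C: "{v\<in>W. c v = j} = {u\<in>W. c u = c v}" by simp
  show ?thesis
  proof (cases "v \<in> solo")
    case True
    have "{u\<in>W. c u = c v} = {v}"
    proof
      show "{u\<in>W. c u = c v} \<subseteq> {v}" using solo_alone[OF True] by blast
      show "{v} \<subseteq> {u\<in>W. c u = c v}" using v(1) by simp
    qed
    then show ?thesis unfolding C using True by simp
  next
    case False
    then have vW: "v \<in> W - solo" using v by blast
    note m = mate_colour_class[OF vW]
    have "{u\<in>W. c u = c v} = {v, mate v}"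
    proof
      show "{u\<in>W. c u = c v} \<subseteq> {v, mate v}" using m(4) by blast
      show "{v, mate v} \<subseteq> {u\<in>W. c u = c v}" using v(1) m(1,3) by auto
    qed
    then show ?thesis unfolding C using vW m(1,2) by simp
  qed
qed

lemma card_W_plus_card_solo: "card W + card solo = 2 * chi W"
proof -
  define C where "C j = {v\<in>W. c v = j}" for j
  have W_eq: "W = (\<Union>j<chi W. C j)" using colouring_c unfolding colouring_def C_def by blast
  have solo_eq: "solo = (\<Union>j<chi W. C j \<inter> solo)" using W_eq solo_subset by blast
  have "card W = (\<Sum>j<chi W. card (C j))"
    by (subst W_eq, rule card_UN_disjoint) (auto simp: C_def finite_W)
  moreover have "card solo = (\<Sum>j<chi W. card (C j \<inter> solo))"
    by (subst solo_eq, rule card_UN_disjoint) (auto simp: C_def finite_W)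
  ultimately have "card W + card solo = (\<Sum>j<chi W. card (C j) + card (C j \<inter> solo))"
    by (simp add: sum.distrib)
  also have "\<dots> = 2 * chi W" using card_colour_class_plus_card_solo unfolding C_def by simp
  finally show ?thesis .
qed

lemma inj_on_mate: "inj_on mate (non_neighbours W w)"
proof
  fix a b assume a: "a \<in> non_neighbours W w" and b: "b \<in> non_neighbours W w" and "mate a = mate b"
  show "a = b"
  proof (rule ccontr)
    assume "a \<noteq> b"
    then have "E a b" using non_neighbours_clique a b by blast
    moreover have "c a = c b"
      using \<open>mate a = mate b\<close> mate_colour_class(3)[OF non_neighbours_not_solo[OF a]]
        mate_colour_class(3)[OF non_neighbours_not_solo[OF b]] by simp
    ultimately show False
      using same_colour_not_adj non_neighbours_not_solo[OF a] non_neighbours_not_solo[OF b] by blast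
  qed
qed

lemma card_solo_plus_card_le_clique_number:
  assumes S: "S \<subseteq> non_neighbours W w" and S_attached: "card (S \<inter> attached) \<le> 1"
  shows "card solo + card S \<le> omega W"
proof -
  have finS: "finite S" using finite_subset[OF S finite_non_neighbours[OF finite_W]] .
  have S_mate: "mate x \<in> W - solo" if "x \<in> S" for x
    using that S mate_colour_class(1)[OF non_neighbours_not_solo] by blast
  have mates_adj: "E (mate a) (mate b)" if ab: "a \<in> S" "b \<in> S" "a \<noteq> b" for a b
  proof -
    have "\<not> {a, b} \<subseteq> S \<inter> attached"
      using S_attached card_mono[OF finite_Int[OF disjI1[OF finS]], of "{a, b}" attached] ab by auto
    then have "a \<notin> attached \<or> b \<notin> attached" using ab by blast
    then show ?thesis
      using mate_adj_mate[of a b] mate_adj_mate[of b a] ab S adj_sym by blast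
  qed
  have cl: "clique W E (solo \<union> mate ` S)"
  proof (rule clique_Un)
    show "clique W E solo" using solo_subset solo_clique unfolding clique_def by blast
    show "clique W E (mate ` S)" using S_mate mates_adj unfolding clique_def by fastforce
    show "\<forall>a\<in>solo. \<forall>b\<in>mate ` S. E a b" using S mate_adj_solo adj_sym by blast
  qed
  have "inj_on mate S" using inj_on_mate S by (rule inj_on_subset)
  then have "card (solo \<union> mate ` S) = card solo + card S"
    using S_mate finS finite_solo by (subst card_Un_disjoint) (auto simp: card_image)
  then show ?thesis using card_le_clique_number[OF finite_W cl] by simp
qed

lemma card_solo_plus_card_attached: "card solo + card attached \<le> omega W + 1"
proof -
  have "clique W E ((solo - {w}) \<union> attached)"
  proof (rule clique_Un)
    show "clique W E (solo - {w})" using solo_subset solo_clique unfolding clique_def by blast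
    show "clique W E attached"
      using non_neighbours_clique unfolding clique_def attached_def non_neighbours_def by blast
    show "\<forall>a\<in>solo - {w}. \<forall>b\<in>attached. E a b" using adj_sym unfolding attached_def by blast
  qed
  then have "card ((solo - {w}) \<union> attached) \<le> omega W" by (rule card_le_clique_number[OF finite_W])
  moreover have "card ((solo - {w}) \<union> attached) = card solo - 1 + card attached"
  proof -
    have "(solo - {w}) \<inter> attached = {}" using non_neighbours_not_solo unfolding attached_def by blast
    moreover have "finite attached"
      using finite_non_neighbours[OF finite_W] unfolding attached_def by simp
    ultimately show ?thesis using finite_solo w_in_solo by (simp add: card_Un_disjoint)
  qed
  moreover have "card solo \<ge> 1"
    using w_in_solo finite_solo by (simp add: Suc_le_eq card_gt_0_iff, blast)
  ultimately show ?thesis by linarith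
qed

lemma two_card_solo_plus_nondegree_le: "2 * card solo + nondegree W w \<le> 2 * omega W"
proof (cases "attached = {}")
  case True
  then have "card solo + nondegree W w \<le> omega W"
    using card_solo_plus_card_le_clique_number[of "non_neighbours W w"] unfolding nondegree_def by simp
  then show ?thesis by linarith
next
  case False
  then obtain x where x: "x \<in> attached" by blast
  let ?S = "insert x (non_neighbours W w - attached)"
  have fin: "finite (non_neighbours W w)" using finite_non_neighbours[OF finite_W] .
  have "?S \<inter> attached = {x}" using x by blast
  then have "card (?S \<inter> attached) \<le> 1" by simp
  moreover have "?S \<subseteq> non_neighbours W w" using x unfolding attached_def by blast
  ultimately have "card solo + card ?S \<le> omega W"
    by (intro card_solo_plus_card_le_clique_number)
  moreover have "card ?S = card (non_neighbours W w - attached) + 1" using x fin by simp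
  moreover have "nondegree W w = card (non_neighbours W w - attached) + card attached"
  proof -
    have "attached \<subseteq> non_neighbours W w" unfolding attached_def by blast
    then show ?thesis
      unfolding nondegree_def using fin card_Diff_subset[of attached] card_mono[OF fin]
      by (simp add: finite_subset)
  qed
  ultimately show ?thesis using card_solo_plus_card_attached by linarith
qed

lemma four_chi_plus_nondegree_le: "4 * chi W + nondegree W w \<le> 2 * card W + 2 * omega W"
  using card_W_plus_card_solo two_card_solo_plus_nondegree_le by linarith

end

context simple_adjacency
begin

lemma critical_vertex_bound:
  assumes fin: "finite W" and w: "w \<in> W"
    and alpha: "\<And>T. T \<subseteq> W \<Longrightarrow> independent T \<Longrightarrow> card T \<le> 2"
    and critical: "chi (W - {w}) < chi W"
  shows "4 * chi W + nondegree W w \<le> 2 * card W + 2 * omega W"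
proof -
  let ?k = "chi (W - {w})"
  obtain c' where c': "colouring (W - {w}) E ?k c'" using colouring_chromatic_number fin by blast
  define c where "c v = (if v \<in> {w} then ?k else c' v)" for v
  have "colouring (W - {w} \<union> {w}) E (Suc ?k) c"
    unfolding c_def by (rule colouring_insert_independent[OF c']) simp
  moreover have "W - {w} \<union> {w} = W" using w by blast
  ultimately have col: "colouring W E (Suc ?k) c" by simp
  then have "chi W = Suc ?k" using chromatic_number_le[OF col] critical by simp
  then have "colouring W E (chi W) c" using col by simp
  moreover have "v = w" if "v \<in> W" "c v = c w" for v
  proof (rule ccontr)
    assume "v \<noteq> w"
    then have "c v < ?k" using c' that(1) unfolding c_def colouring_def by simp
    then show False using that(2) unfolding c_def by simp
  qed
  ultimately interpret alpha_two_colouring E W w c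
    using fin w alpha by unfold_locales auto
  show ?thesis by (rule four_chi_plus_nondegree_le)
qed

definition bounding_vertex :: "'a set \<Rightarrow> 'a set \<Rightarrow> 'a \<Rightarrow> bool" where
  "bounding_vertex W H v \<longleftrightarrow>
     4 * chi W + card H + nondegree W v \<le> 2 * card W + 2 * omega W + 3 * chi H"

lemma independent_bounding_vertex:
  assumes fin: "finite W" and indep: "independent W" and H: "H \<subseteq> W" "h \<in> H"
  shows "bounding_vertex W H h"
proof -
  have h: "h \<in> W" using H by blast
  have "chi W \<le> 1" using indep by (rule chromatic_number_independent)
  moreover have "nondegree W h \<le> card W - 1"
    using fin h by (rule nondegree_le_card_Diff1) (simp add: non_neighbours_def)
  moreover have "card H \<le> card W" using fin H(1) by (rule card_mono)
  moreover have "1 \<le> omega W" using fin h by (rule clique_number_pos)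
  moreover have "0 < chi H" using H fin by (intro chromatic_number_pos) (auto intro: finite_subset)
  moreover have "0 < card W" using fin h by (auto simp: card_gt_0_iff)
  ultimately show ?thesis unfolding bounding_vertex_def by linarith
qed

lemma bounding_vertex_Diff_independent:
  assumes fin: "finite W" and I: "I \<subseteq> W" "independent I" and dom: "\<forall>z\<in>W - I. \<exists>i\<in>I. E z i"
    and H: "H \<subseteq> W" and chi_H: "chi (H - I) < chi H" and v: "v \<in> W - I"
    and bound: "bounding_vertex (W - I) (H - I) v"
  shows "bounding_vertex W H v"
proof -
  have finI: "finite I" using finite_subset[OF I(1) fin] .
  obtain i where i: "i \<in> I" "E v i" using dom v by blast
  have "chi W \<le> Suc (chi (W - I))" using fin I(2,1) by (rule chromatic_number_le_Suc_Diff_independent)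
  moreover have "card W = card (W - I) + card I"
    using fin I(1) card_Diff_subset[OF finI I(1)] card_mono[OF fin I(1)] by simp
  moreover have "card H \<le> card (H - I) + card I"
  proof -
    have "card H \<le> card ((H - I) \<union> I)" using finI fin H by (intro card_mono) (auto intro: finite_subset)
    also have "\<dots> \<le> card (H - I) + card I" by (rule card_Un_le)
    finally show ?thesis .
  qed
  moreover have "nondegree W v \<le> nondegree (W - I) v + (card I - 1)"
  proof -
    have "nondegree W v \<le> nondegree (W - I) v + nondegree (W \<inter> I) v"
      using fin by (rule nondegree_le_Diff)
    moreover have "W \<inter> I = I" using I(1) by blast
    moreover have "nondegree I v \<le> card I - 1"
      using finI i by (intro nondegree_le_card_Diff1) (auto simp: non_neighbours_def)
    ultimately show ?thesis by simp
  qed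
  moreover have "omega (W - I) \<le> omega W" using fin by (rule clique_number_mono) blast
  moreover have "0 < card I" using finI i(1) by (auto simp: card_gt_0_iff)
  ultimately show ?thesis using bound chi_H unfolding bounding_vertex_def by linarith
qed

lemma exists_bounding_vertex_nonempty_step:
  assumes fin: "finite W" and H: "H \<subseteq> W" "H \<noteq> {}"
    and IH: "\<And>W' H'. W' \<subset> W \<Longrightarrow> W' \<noteq> {} \<Longrightarrow> H' \<subseteq> W' \<Longrightarrow> \<exists>v\<in>W'. bounding_vertex W' H' v"
  shows "\<exists>v\<in>W. bounding_vertex W H v"
proof -
  have finH: "finite H" using finite_subset[OF H(1) fin] .
  obtain c where c: "colouring H E (chi H) c" using colouring_chromatic_number[OF finH] .
  obtain h where h: "h \<in> H" using H(2) by blast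
  let ?J = "{v\<in>H. c v = c h}"
  have J: "?J \<subseteq> W" "independent ?J" using H(1) independent_colour_class[OF c] by auto
  obtain I where I: "?J \<subseteq> I" "I \<subseteq> W" "independent I" "\<forall>z\<in>W - I. \<exists>i\<in>I. E z i"
    by (rule maximal_independent_extension[OF fin J])
  have "c h < chi H" using c h unfolding colouring_def by blast
  then have chi_H: "chi (H - I) < chi H"
    using c I(1) by (intro chromatic_number_Diff_colour_class)
  show ?thesis
  proof (cases "W - I = {}")
    case True
    then have "independent W" using I(3) independent_subset by blast
    then show ?thesis using independent_bounding_vertex[OF fin _ H(1) h] H(1) h by blast
  next
    case False
    have "h \<in> I" using I(1) h by blast
    then have "W - I \<subset> W" using H(1) h by blast
    moreover have "H - I \<subseteq> W - I" using H(1) by blast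
    ultimately obtain v where "v \<in> W - I" "bounding_vertex (W - I) (H - I) v"
      using IH[OF _ False] by blast
    then show ?thesis using bounding_vertex_Diff_independent[OF fin I(2,3,4) H(1) chi_H] by blast
  qed
qed

lemma exists_bounding_vertex_empty_step:
  assumes fin: "finite W" and ne: "W \<noteq> {}"
    and IH: "\<And>W' H'. W' \<subset> W \<Longrightarrow> W' \<noteq> {} \<Longrightarrow> H' \<subseteq> W' \<Longrightarrow> \<exists>v\<in>W'. bounding_vertex W' H' v"
  shows "\<exists>v\<in>W. bounding_vertex W {} v"
proof (cases "\<exists>T\<subseteq>W. independent T \<and> 3 \<le> card T")
  case True
  then obtain T where T: "T \<subseteq> W" "independent T" "3 \<le> card T" by blast
  then have "T \<noteq> {}" by auto
  then obtain v where "v \<in> W" "bounding_vertex W T v"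
    using exists_bounding_vertex_nonempty_step[OF fin T(1) _ IH] by blast
  moreover have "chi T \<le> 1" using T(2) by (rule chromatic_number_independent)
  ultimately have "bounding_vertex W {} v"
    using T(3) chromatic_number_empty unfolding bounding_vertex_def by simp
  then show ?thesis using \<open>v \<in> W\<close> by blast
next
  case False
  then have alpha: "\<And>T. T \<subseteq> W \<Longrightarrow> independent T \<Longrightarrow> card T \<le> 2" by fastforce
  obtain w where w: "w \<in> W" using ne by blast
  show ?thesis
  proof (cases "chi (W - {w}) < chi W")
    case True
    with fin w alpha have "4 * chi W + nondegree W w \<le> 2 * card W + 2 * omega W"
      by (rule critical_vertex_bound)
    then show ?thesis using w chromatic_number_empty unfolding bounding_vertex_def by auto
  next
    case False
    have "W - {w} \<noteq> {}"
    proof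
      assume "W - {w} = {}"
      then have "chi (W - {w}) = 0" using chromatic_number_empty by (simp only:)
      then show False using False chromatic_number_pos[OF fin ne] by simp
    qed
    moreover have "W - {w} \<subset> W" using w by blast
    ultimately obtain v where v: "v \<in> W - {w}" and bound: "bounding_vertex (W - {w}) {} v"
      using IH[of "W - {w}" "{}"] by blast
    have "nondegree W v \<le> nondegree (W - {w}) v + nondegree (W \<inter> {w}) v"
      using fin by (rule nondegree_le_Diff)
    moreover have "nondegree (W \<inter> {w}) v \<le> 1"
      using nondegree_le_card[of "W \<inter> {w}" v] w by simp
    moreover have "omega (W - {w}) \<le> omega W" using fin by (rule clique_number_mono) blast
    moreover have "card W = card (W - {w}) + 1" using card_Suc_Diff1[OF fin w] by simp
    ultimately have "bounding_vertex W {} v"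
      using bound False unfolding bounding_vertex_def by simp
    then show ?thesis using v by blast
  qed
qed

lemma exists_bounding_vertex:
  assumes "finite W" "W \<noteq> {}" "H \<subseteq> W"
  shows "\<exists>v\<in>W. bounding_vertex W H v"
  using assms
proof (induction arbitrary: H rule: finite_psubset_induct)
  case (psubset W)
  have IH: "\<exists>v\<in>W'. bounding_vertex W' H' v" if "W' \<subset> W" "W' \<noteq> {}" "H' \<subseteq> W'" for W' H'
    using psubset.IH[OF that(1)] that(2,3) by blast
  show ?case
  proof (cases "H = {}")
    case True
    then show ?thesis using exists_bounding_vertex_empty_step[OF psubset.hyps psubset.prems(1) IH] by simp
  next
    case False
    then show ?thesis using exists_bounding_vertex_nonempty_step[OF psubset.hyps psubset.prems(2) _ IH] by blast
  qed
qed

lemma degree_plus_nondegree: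
  assumes fin: "finite W" and v: "v \<in> W"
  shows "degree W E v + nondegree W v + 1 = card W"
proof -
  let ?N = "{u\<in>W. E v u}"
  have "W = insert v (?N \<union> non_neighbours W v)"
    using v unfolding non_neighbours_def by blast
  moreover have "v \<notin> ?N \<union> non_neighbours W v"
    using adj_irrefl unfolding non_neighbours_def by blast
  moreover have "?N \<inter> non_neighbours W v = {}" unfolding non_neighbours_def by blast
  moreover have "finite ?N" "finite (non_neighbours W v)" using fin finite_non_neighbours by auto
  ultimately have "card W = Suc (card ?N + card (non_neighbours W v))"
    by (metis card_Un_disjoint card_insert_disjoint finite_UnI)
  then show ?thesis unfolding degree_def nondegree_def by simp
qed

lemma degree_complement:
  assumes "v \<in> W"
  shows "degree W (complement W E) v = nondegree W v"
proof -
  have "{u\<in>W. complement W E v u} = non_neighbours W v"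
    using assms unfolding complement_def non_neighbours_def by blast
  then show ?thesis unfolding degree_def nondegree_def by simp
qed

lemma max_degree_plus_min_degree_complement:
  assumes fin: "finite W" and ne: "W \<noteq> {}"
  shows "max_degree W E + min_degree W (complement W E) + 1 = card W"
proof -
  have "max_degree W E \<in> degree W E ` W" unfolding max_degree_def using fin ne by (intro Max_in) auto
  then obtain v where v: "v \<in> W" "max_degree W E = degree W E v" by blast
  have "min_degree W (complement W E) \<in> degree W (complement W E) ` W"
    unfolding min_degree_def using fin ne by (intro Min_in) auto
  then obtain u where u: "u \<in> W" "min_degree W (complement W E) = nondegree W u"
    using degree_complement by auto
  have "min_degree W (complement W E) \<le> nondegree W v"
    unfolding min_degree_def using fin v(1) degree_complement[OF v(1), symmetric] by (intro Min_le) auto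
  moreover have "degree W E u \<le> max_degree W E" unfolding max_degree_def using fin u(1) by (intro Max_ge) auto
  ultimately show ?thesis using degree_plus_nondegree[OF fin u(1)] degree_plus_nondegree[OF fin v(1)] u(2) v(2)
    by linarith
qed

lemma min_degree_complement_le:
  assumes "finite W" "v \<in> W"
  shows "min_degree W (complement W E) \<le> nondegree W v"
  unfolding min_degree_def using assms degree_complement[OF assms(2), symmetric] by (intro Min_le) auto

lemma chromatic_number_bound:
  assumes fin: "finite W" and ne: "W \<noteq> {}" and H: "H \<subseteq> W"
  shows "4 * chi W + card H
    \<le> 2 * omega W + 2 * max_degree W E + 2 + min_degree W (complement W E) + 3 * chi H"
proof -
  obtain v where v: "v \<in> W" "4 * chi W + card H + nondegree W v \<le> 2 * card W + 2 * omega W + 3 * chi H"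
    using exists_bounding_vertex[OF assms] unfolding bounding_vertex_def by blast
  show ?thesis
    using v(2) min_degree_complement_le[OF fin v(1)] max_degree_plus_min_degree_complement[OF fin ne]
    by linarith
qed

end

lemma chromatic_number_induced: "chromatic_number H (induced E H) = chromatic_number H E"
  unfolding chromatic_number_def colouring_def induced_def by simp

lemma chromatic_excess_attained:
  assumes "finite V" "V \<noteq> {}"
  obtains H where "H \<subseteq> V" "H \<noteq> {}"
    "chromatic_excess V E = int (card H) - 3 * int (chromatic_number H E)"
proof -
  let ?f = "\<lambda>H. int (card H) - 3 * int (chromatic_number H (induced E H))"
  have "finite {H. H \<subseteq> V \<and> H \<noteq> {}}" using assms(1) by simp
  moreover have "{H. H \<subseteq> V \<and> H \<noteq> {}} \<noteq> {}" using assms(2) by blast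
  ultimately have "chromatic_excess V E \<in> ?f ` {H. H \<subseteq> V \<and> H \<noteq> {}}"
    unfolding chromatic_excess_def by (intro Max_in) auto
  then obtain H where "H \<subseteq> V" "H \<noteq> {}" "chromatic_excess V E = ?f H" by blast
  then show thesis using that[of H] by (simp add: chromatic_number_induced)
qed

theorem corollary12:
  fixes V :: "'a set" and E :: "'a \<Rightarrow> 'a \<Rightarrow> bool"
  assumes "graph V E"
  shows "real (chromatic_number V E) \<le>
           (real (clique_number V E) + real (max_degree V E) + 1) / 2
           + (real (min_degree V (complement V E)) - real_of_int (chromatic_excess V E)) / 4"
proof -
  interpret simple_adjacency E using assms by unfold_locales (auto simp: graph_def)
  have fin: "finite V" and ne: "V \<noteq> {}" using assms by (auto simp: graph_def)
  obtain H where H: "H \<subseteq> V" and excess: "chromatic_excess V E = int (card H) - 3 * int (chi H)"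
    using chromatic_excess_attained[OF fin ne] by blast
  have "real (4 * chi V + card H)
      \<le> real (2 * omega V + 2 * max_degree V E + 2 + min_degree V (complement V E) + 3 * chi H)"
    using chromatic_number_bound[OF fin ne H] by (rule of_nat_mono)
  then show ?thesis using excess by (simp add: field_simps)
qed

end
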